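(* Let $E$ be a normed space and $\tau$ a linear topology on $E$ weaker than the norm topology. Then the following are equivalent: (a) $\tau$ equals the norm topology; (b) $0_E$ is $\tau$-separated from $\mathrm{S}_E$; (c) $\overline{\mathrm{B}}_E\not\subset\overline{\mathrm{S}_E}^{\tau}$, where $\overline{\mathrm{S}_E}^{\tau}$ is the $\tau$-closure of $\mathrm{S}_E$.
   Context: $\overline{\mathrm{B}}_E$ is the closed unit ball and $\mathrm{S}_E$ the unit sphere of $E$. $0_E$ is $\tau$-separated from a set $A$ if some $\tau$-neighborhood of $0_E$ is disjoint from $A$. *)

theory Defs
  imports "HOL-Analysis.Analysis"
begin

definition linear_topology :: "'a::real_vector topology \<Rightarrow> bool" where
  "linear_topology T \<longleftrightarrow>
     topspace T = UNIV \<and>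
     continuous_map (prod_topology T T) T (\<lambda>(x, y). x + y) \<and>
     continuous_map (prod_topology euclideanreal T) T (\<lambda>(a, x). a *\<^sub>R x)"

definition weaker_than_norm :: "'a::real_normed_vector topology \<Rightarrow> bool" where
  "weaker_than_norm T \<longleftrightarrow> (\<forall>U. openin T U \<longrightarrow> open U)"

definition separated_from :: "'a topology \<Rightarrow> 'a \<Rightarrow> 'a set \<Rightarrow> bool" where
  "separated_from T x A \<longleftrightarrow>
     (\<exists>N. (\<exists>U. openin T U \<and> x \<in> U \<and> U \<subseteq> N) \<and> N \<inter> A = {})"

end

theory Submission
  imports Defs
begin

text \<open>In a linear topology every neighbourhood of 0 contains a balanced one.
If 0 is separated from the unit sphere by U, a balanced neighbourhood inside U cannot
contain vectors of norm > 1, so it is bounded; its translates and dilates then form a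
neighbourhood base for the norm topology, and since T is weaker the two coincide.
Conversely, if T is not the norm topology, every T-neighbourhood of 0 is unbounded, so
every balanced neighbourhood W of 0 contains a long vector w; for y in the open ball the
segment from y to y + w meets the sphere, so y is a T-limit of points of the sphere.\<close>

lemma linear_topology_topspace:
  "linear_topology T \<Longrightarrow> topspace T = UNIV"
  by (simp add: linear_topology_def)

lemma continuous_map_linear_topology_affine:
  fixes T :: "'a::real_normed_vector topology"
  assumes "linear_topology T"
  shows "continuous_map T T (\<lambda>z. a *\<^sub>R (z + b))"
proof -
  have top: "topspace T = UNIV"
    and add: "continuous_map (prod_topology T T) T (\<lambda>(x, y). x + y)"
    and scale: "continuous_map (prod_topology euclideanreal T) T (\<lambda>(a, x). a *\<^sub>R x)"
    using assms unfolding linear_topology_def by auto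
  have "continuous_map T (prod_topology T T) (\<lambda>z. (z, b))"
    by (rule continuous_map_pairedI) (auto simp: top)
  then have "continuous_map T T ((\<lambda>(x, y). x + y) \<circ> (\<lambda>z. (z, b)))"
    by (rule continuous_map_compose[OF _ add])
  then have translate: "continuous_map T T (\<lambda>z. z + b)" by (simp add: o_def)
  have "continuous_map T (prod_topology euclideanreal T) (\<lambda>z. (a, z + b))"
    by (rule continuous_map_pairedI) (auto simp: translate)
  then have "continuous_map T T ((\<lambda>(a, x). a *\<^sub>R x) \<circ> (\<lambda>z. (a, z + b)))"
    by (rule continuous_map_compose[OF _ scale])
  then show ?thesis by (simp add: o_def)
qed

lemma openin_linear_topology_affine_preimage:
  fixes T :: "'a::real_normed_vector topology"
  assumes "linear_topology T" "openin T W"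
  shows "openin T {z. a *\<^sub>R (z + b) \<in> W}"
  using openin_continuous_map_preimage[OF continuous_map_linear_topology_affine[OF assms(1)] assms(2)]
  by (simp add: linear_topology_topspace[OF assms(1)])

lemma linear_topology_balanced_neighbourhood:
  fixes T :: "'a::real_normed_vector topology"
  assumes lt: "linear_topology T" and V: "openin T V" "0 \<in> V"
  obtains W where "openin T W" "0 \<in> W" "\<And>a w. \<bar>a\<bar> \<le> 1 \<Longrightarrow> w \<in> W \<Longrightarrow> a *\<^sub>R w \<in> V"
proof -
  have scale: "continuous_map (prod_topology euclideanreal T) T (\<lambda>(a, x). a *\<^sub>R x)"
    using lt by (simp add: linear_topology_def)
  have "openin (prod_topology euclideanreal T)
      {p \<in> topspace (prod_topology euclideanreal T). (\<lambda>(a, x). a *\<^sub>R x) p \<in> V}"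
    by (rule openin_continuous_map_preimage[OF scale V(1)])
  then have preimage: "openin (prod_topology euclideanreal T) {(a, x). a *\<^sub>R x \<in> V}"
    by (simp add: linear_topology_topspace[OF lt] case_prod_unfold)
  have "(0::real, 0::'a) \<in> {(a, x). a *\<^sub>R x \<in> V}" using V by simp
  then obtain A W' where AW': "openin euclideanreal A" "openin T W'" "0 \<in> A" "0 \<in> W'"
      "A \<times> W' \<subseteq> {(a, x). a *\<^sub>R x \<in> V}"
    using preimage[unfolded openin_prod_topology_alt, rule_format] by metis
  have "open A" using AW'(1) by simp
  then obtain d where d: "d > 0" "ball 0 d \<subseteq> A"
    using AW'(3) open_contains_ball by blast
  \<comment> \<open>Shrink W' by d/2: then a w = (a d/2)((2/d) w) with a d/2 \<in> ball 0 d whenever |a| \<le> 1.\<close>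
  show ?thesis
  proof
    show "openin T {z. (2/d) *\<^sub>R (z + 0) \<in> W'}"
      by (rule openin_linear_topology_affine_preimage[OF lt AW'(2)])
    show "0 \<in> {z. (2/d) *\<^sub>R (z + 0) \<in> W'}" using AW'(4) by simp
  next
    fix a :: real and w assume a: "\<bar>a\<bar> \<le> 1" and w: "w \<in> {z. (2/d) *\<^sub>R (z + 0) \<in> W'}"
    have "\<bar>a * d / 2\<bar> < d"
      using a d(1) mult_right_mono[OF a, of d] by (simp add: abs_mult)
    then have "a * d / 2 \<in> ball 0 d" by (simp add: dist_norm)
    then have "a * d / 2 \<in> A" using d(2) by blast
    moreover have "(2/d) *\<^sub>R w \<in> W'" using w by simp
    ultimately have "(a * d / 2) *\<^sub>R ((2/d) *\<^sub>R w) \<in> V" using AW'(5) by blast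
    then show "a *\<^sub>R w \<in> V" using d(1) by simp
  qed
qed

lemma linear_topology_eq_euclidean_if_bounded_neighbourhood:
  fixes T :: "'a::real_normed_vector topology"
  assumes lt: "linear_topology T" and "weaker_than_norm T"
    and W: "openin T W" "0 \<in> W" "bounded W"
  shows "T = euclidean"
proof -
  obtain R where R: "R > 0" "\<And>w. w \<in> W \<Longrightarrow> norm w \<le> R"
    using W(3) bounded_pos by metis
  have "openin T Q" if "open Q" for Q
  proof (subst openin_subopen, intro ballI)
    fix x assume "x \<in> Q"
    then obtain e where e: "e > 0" "ball x e \<subseteq> Q" using \<open>open Q\<close> open_contains_ball by blast
    define c where "c = e / (2 * R)"
    have c: "c > 0" "c * R < e" using e R by (simp_all add: c_def)
    define V where "V = {z. (1/c) *\<^sub>R (z + - x) \<in> W}"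
    have "openin T V" unfolding V_def by (rule openin_linear_topology_affine_preimage[OF lt W(1)])
    moreover have "x \<in> V" using W(2) by (simp add: V_def)
    moreover have "V \<subseteq> Q"
    proof
      fix z assume "z \<in> V"
      then have "norm (z - x) / c \<le> R" using R(2) c(1) by (force simp: V_def)
      then have "dist x z < e"
        using c by (simp add: divide_le_eq dist_norm norm_minus_commute mult.commute)
      then show "z \<in> Q" using e(2) by auto
    qed
    ultimately show "\<exists>U. openin T U \<and> x \<in> U \<and> U \<subseteq> Q" by blast
  qed
  then show ?thesis
    using assms(2) unfolding weaker_than_norm_def by (auto simp: topology_eq)
qed

lemma separated_from_iff_openin:
  "separated_from T x A \<longleftrightarrow> (\<exists>U. openin T U \<and> x \<in> U \<and> U \<inter> A = {})"
  unfolding separated_from_def by blast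

lemma bounded_neighbourhood_if_separated_from_sphere:
  fixes T :: "'a::real_normed_vector topology"
  assumes lt: "linear_topology T" and "r \<ge> 0" and "separated_from T 0 (sphere 0 r)"
  obtains W where "openin T W" "0 \<in> W" "bounded W"
proof -
  obtain U where U: "openin T U" "0 \<in> U" "U \<inter> sphere 0 r = {}"
    using assms(3) separated_from_iff_openin by metis
  obtain W where W: "openin T W" "0 \<in> W" "\<And>a w. \<bar>a\<bar> \<le> 1 \<Longrightarrow> w \<in> W \<Longrightarrow> a *\<^sub>R w \<in> U"
    using linear_topology_balanced_neighbourhood[OF lt U(1,2)] by blast
  have "norm w \<le> r" if w: "w \<in> W" for w
  proof (rule ccontr)
    assume "\<not> norm w \<le> r"
    then have "norm w > r" "norm w > 0" using \<open>r \<ge> 0\<close> by auto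
    then have "(r / norm w) *\<^sub>R w \<in> U" "(r / norm w) *\<^sub>R w \<in> sphere 0 r"
      using W(3)[OF _ w] \<open>r \<ge> 0\<close> by auto
    then show False using U(3) by blast
  qed
  then have "bounded W" by (auto simp: bounded_iff)
  then show ?thesis using W(1,2) that by blast
qed

lemma cball_subset_closure_of_sphere_if_unbounded_neighbourhoods:
  fixes T :: "'a::real_normed_vector topology"
  assumes lt: "linear_topology T"
    and unbounded: "\<And>W. openin T W \<Longrightarrow> 0 \<in> W \<Longrightarrow> \<not> bounded W"
  shows "cball 0 r \<subseteq> T closure_of sphere 0 r"
proof
  fix y :: 'a assume y: "y \<in> cball 0 r"
  show "y \<in> T closure_of sphere 0 r"
  proof (cases "norm y = r")
    case True
    then show ?thesis
      using closure_of_subset[of "sphere 0 r" T] by (auto simp: linear_topology_topspace[OF lt])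
  next
    case False
    then have y_inside: "norm y < r" using y by simp
    show ?thesis unfolding in_closure_of
    proof (intro conjI allI impI)
      show "y \<in> topspace T" by (simp add: linear_topology_topspace[OF lt])
      fix N assume N: "y \<in> N \<and> openin T N"
      have shifted_open: "openin T {z. 1 *\<^sub>R (z + y) \<in> N}"
        using N openin_linear_topology_affine_preimage[OF lt] by blast
      have shifted_0: "0 \<in> {z. 1 *\<^sub>R (z + y) \<in> N}" using N by simp
      obtain W where W: "openin T W" "0 \<in> W"
          "\<And>a w. \<bar>a\<bar> \<le> 1 \<Longrightarrow> w \<in> W \<Longrightarrow> a *\<^sub>R w \<in> {z. 1 *\<^sub>R (z + y) \<in> N}"
        using linear_topology_balanced_neighbourhood[OF lt shifted_open shifted_0] by blast
      obtain w where w: "w \<in> W" "norm w > 2 * r"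
        using unbounded[OF W(1,2)] by (meson bounded_iff not_le)
      define f where "f t = norm (y + t *\<^sub>R w)" for t :: real
      have "continuous_on {0..1} f" unfolding f_def by (intro continuous_intros)
      moreover have "f 0 \<le> r" using y_inside by (simp add: f_def)
      moreover have "r \<le> f 1"
        using norm_triangle_ineq4[of "y + w" y] w(2) y_inside by (simp add: f_def)
      ultimately obtain t where t: "0 \<le> t" "t \<le> 1" "f t = r"
        using IVT'[of f 0 r 1] by auto
      then have "y + t *\<^sub>R w \<in> N" "y + t *\<^sub>R w \<in> sphere 0 r"
        using W(3)[of t w] w(1) by (simp_all add: f_def add.commute)
      then show "\<exists>z. z \<in> sphere 0 r \<and> z \<in> N" by blast
    qed
  qed
qed

theorem corollary2p3:
  fixes T :: "'a::real_normed_vector topology"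
  assumes "linear_topology T" and "weaker_than_norm T"
  shows "(T = euclidean \<longleftrightarrow> separated_from T 0 (sphere 0 1))
       \<and> (separated_from T 0 (sphere 0 1) \<longleftrightarrow> \<not> (cball 0 1 \<subseteq> T closure_of (sphere 0 1)))"
proof -
  have euclidean_sep: "separated_from T 0 (sphere 0 1)" if "T = euclidean"
    using that unfolding separated_from_iff_openin
    by (intro exI[of _ "ball 0 1"]) auto
  have sep_euclidean: "T = euclidean" if sep: "separated_from T 0 (sphere 0 1)"
  proof -
    obtain W where "openin T W" "0 \<in> W" "bounded W"
      by (rule bounded_neighbourhood_if_separated_from_sphere[OF assms(1) zero_le_one sep])
    then show ?thesis by (rule linear_topology_eq_euclidean_if_bounded_neighbourhood[OF assms])
  qed
  have sep_not_cball: "\<not> cball 0 1 \<subseteq> T closure_of (sphere 0 1)"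
    if "separated_from T 0 (sphere 0 1)"
  proof -
    have "0 \<notin> T closure_of (sphere 0 1)"
      using that unfolding separated_from_iff_openin in_closure_of by blast
    moreover have "(0::'a) \<in> cball 0 1" by simp
    ultimately show ?thesis by blast
  qed
  have not_sep_closure: "cball 0 1 \<subseteq> T closure_of (sphere 0 1)"
    if not_sep: "\<not> separated_from T 0 (sphere 0 1)"
  proof (rule cball_subset_closure_of_sphere_if_unbounded_neighbourhoods[OF assms(1)])
    fix W assume W: "openin T W" "0 \<in> W"
    show "\<not> bounded W"
    proof
      assume "bounded W"
      then have "T = euclidean"
        by (rule linear_topology_eq_euclidean_if_bounded_neighbourhood[OF assms W])
      from euclidean_sep[OF this] not_sep show False by contradiction
    qed
  qed
  have "T = euclidean \<longleftrightarrow> separated_from T 0 (sphere 0 1)"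
    by (rule iffI[OF euclidean_sep sep_euclidean])
  moreover have "separated_from T 0 (sphere 0 1) \<longleftrightarrow> \<not> (cball 0 1 \<subseteq> T closure_of (sphere 0 1))"
    using sep_not_cball not_sep_closure by metis
  ultimately show ?thesis ..
qed

end
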